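(* In the setting described in the context with $N_s=3M$, let $\mathbf N=[\mathbf H,\mathbf A,\dot{\mathbf A}_\theta,\dot{\mathbf A}_\phi]\in\mathbb C^{N_t\times(K+3M)}$. Then the problem $\max\{f(\mathbf W):\mathbf W\in\mathbb C^{N_t\times(K+3M)},\ \mathrm{tr}(\mathbf W\mathbf W^H)\le P_t\}$ can be reformulated as $$\max_{\mathbf P\in\mathbb C^{(K+3M)\times(K+3M)}}\ f(\mathbf N\mathbf P)\quad\text{s.t.}\quad \mathrm{tr}(\mathbf P\mathbf P^H\mathbf N^H\mathbf N)\le P_t,$$ i.e., the two problems have the same optimal value, and $\mathbf W=\mathbf N\mathbf P$ is optimal for the former whenever $\mathbf P$ is optimal for the latter.
   Context: Positive integers $N_t,N_r,K,M,L$; channels $\mathbf h_k\in\mathbb C^{N_t}$, $\mathbf H=[\mathbf h_1,\dots,\mathbf h_K]$, noise variances $\sigma_{ck}^2>0$; $\sigma_s^2>0$; weights $\delta_c,\delta_s\ge0$; $P_t>0$. $\mathbf W=[\mathbf W_c,\mathbf W_s]$ with $\mathbf W_c=[\mathbf w_{c1},\dots,\mathbf w_{cK}]\in\mathbb C^{N_t\times K}$, $\mathbf W_s\in\mathbb C^{N_t\times N_s}$, $\mathbf R_x=\mathbf W\mathbf W^H$. Rate $R_k(\mathbf W)=\log\big(1+\frac{|\mathbf h_k^H\mathbf w_{ck}|^2}{\sum_{j\ne k}|\mathbf h_k^H\mathbf w_{cj}|^2+\|\mathbf h_k^H\mathbf W_s\|_F^2+\sigma_{ck}^2}\big)$. Sensing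 model: differentiable $\mathbf a:\mathbb R^2\to\mathbb C^{N_t}$, $\mathbf b:\mathbb R^2\to\mathbb C^{N_r}$; parameters $\theta_m,\phi_m\in\mathbb R,\alpha_m\in\mathbb C$; $\mathbf A=[\mathbf a(\theta_m,\phi_m)]_m$, $\mathbf B=[\mathbf b(\theta_m,\phi_m)]_m$, $\mathbf U=\mathrm{diag}(\alpha_m)$; $\dot{\mathbf A}_\theta,\dot{\mathbf A}_\phi,\dot{\mathbf B}_\theta,\dot{\mathbf B}_\phi$ have $m$-th columns the partial derivatives of $\mathbf a$ resp. $\mathbf b$ w.r.t. first resp. second argument at $(\theta_m,\phi_m)$. $\mathbf F(\mathbf W)=\frac{2L}{\sigma_s^2}\begin{bmatrix}\Re\mathbf F_{11}&\Re\mathbf F_{12}&\Re\mathbf F_{13}&-\Im\mathbf F_{13}\\ \Re\mathbf F_{12}^{\mathsf T}&\Re\mathbf F_{22}&\Re\mathbf F_{23}&-\Im\mathbf F_{23}\\ \Re\mathbf F_{13}^{\mathsf T}&\Re\mathbf F_{23}^{\mathsf T}&\Re\mathbf F_{33}&-\Im\mathbf F_{33}\\ -\Im\mathbf F_{13}^{\mathsf T}&-\Im\mathbf F_{23}^{\mathsf T}&-\Im\mathbf F_{33}^{\mathsf T}&\Re\mathbf F_{33}\end{bmatrix}$ with $\mathbf F_{11}=(\mathbf U\mathbf A^H\mathbf R_x\mathbf A\mathbf U^H)^{\mathsf T}\odot(\dot{\mathbf B}_\theta^H\dot{\mathbf B}_\theta)+(\mathbf U\mathbf A^H\mathbf R_x\dot{\mathbf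 A}_\theta\mathbf U^H)^{\mathsf T}\odot(\mathbf B^H\dot{\mathbf B}_\theta)+(\mathbf U\dot{\mathbf A}_\theta^H\mathbf R_x\mathbf A\mathbf U^H)^{\mathsf T}\odot(\dot{\mathbf B}_\theta^H\mathbf B)+(\mathbf U\dot{\mathbf A}_\theta^H\mathbf R_x\dot{\mathbf A}_\theta\mathbf U^H)^{\mathsf T}\odot(\mathbf B^H\mathbf B)$; $\mathbf F_{12}=(\mathbf U\mathbf A^H\mathbf R_x\mathbf A\mathbf U^H)^{\mathsf T}\odot(\dot{\mathbf B}_\theta^H\dot{\mathbf B}_\phi)+(\mathbf U\mathbf A^H\mathbf R_x\dot{\mathbf A}_\theta\mathbf U^H)^{\mathsf T}\odot(\mathbf B^H\dot{\mathbf B}_\phi)+(\mathbf U\dot{\mathbf A}_\phi^H\mathbf R_x\mathbf A\mathbf U^H)^{\mathsf T}\odot(\dot{\mathbf B}_\theta^H\mathbf B)+(\mathbf U\dot{\mathbf A}_\phi^H\mathbf R_x\dot{\mathbf A}_\theta\mathbf U^H)^{\mathsf T}\odot(\mathbf B^H\mathbf B)$; $\mathbf F_{22}$ = $\mathbf F_{11}$ with $\theta\to\phi$; $\mathbf F_{13}=(\mathbf A^H\mathbf R_x\mathbf A\mathbf U^H)^{\mathsf T}\odot(\dot{\mathbf B}_\theta^H\mathbf B)+(\mathbf A^H\mathbf R_x\dot{\mathbf A}_\theta\mathbf U^H)^{\mathsf T}\odot(\mathbf B^H\mathbf B)$; $\mathbf F_{23}$ = $\mathbf F_{13}$ with $\theta\to\phi$;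 $\mathbf F_{33}=(\mathbf A^H\mathbf R_x\mathbf A)^{\mathsf T}\odot(\mathbf B^H\mathbf B)$ ($\odot$ Hadamard). $f(\mathbf W)=\delta_c\sum_{k=1}^KR_k(\mathbf W)-\delta_s\mathrm{tr}(\mathbf F(\mathbf W)^{-1})$ (considered where $\mathbf F(\mathbf W)$ is invertible). *)

theory Defs
  imports "HOL-Analysis.Analysis" "Jordan_Normal_Form.Matrix"
begin

definition herm :: "complex mat \<Rightarrow> complex mat" where
  "herm X = transpose_mat (map_mat cnj X)"

definition mtrace :: "'a::comm_ring_1 mat \<Rightarrow> 'a" where
  "mtrace X = (\<Sum>i<dim_row X. X $$ (i, i))"

definition hprod :: "'a::times mat \<Rightarrow> 'a mat \<Rightarrow> 'a mat" where
  "hprod X Y = mat (dim_row X) (dim_col X) (\<lambda>(i, j). X $$ (i, j) * Y $$ (i, j))"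

definition minv :: "'a::comm_ring_1 mat \<Rightarrow> 'a mat" where
  "minv X = (SOME Y. Y \<in> carrier_mat (dim_row X) (dim_row X) \<and>
                     X * Y = 1\<^sub>m (dim_row X) \<and> Y * X = 1\<^sub>m (dim_row X))"

definition ReM :: "complex mat \<Rightarrow> real mat" where "ReM X = map_mat Re X"
definition ImM :: "complex mat \<Rightarrow> real mat" where "ImM X = map_mat Im X"

text \<open>A steering vector function \<open>a :: real \<times> real \<Rightarrow> nat \<Rightarrow> complex\<close> gives the
  entries \<open>a (\<theta>,\<phi>) i\<close>, \<open>i < n\<close>, of the vector \<open>a(\<theta>,\<phi>) \<in> \<complex>^n\<close>.\<close>

definition steer_mat :: "nat \<Rightarrow> nat \<Rightarrow> (real \<times> real \<Rightarrow> nat \<Rightarrow> complex)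
    \<Rightarrow> (nat \<Rightarrow> real) \<Rightarrow> (nat \<Rightarrow> real) \<Rightarrow> complex mat" where
  "steer_mat n M a \<theta> \<phi> = mat n M (\<lambda>(i, m). a (\<theta> m, \<phi> m) i)"

definition dtheta_mat :: "nat \<Rightarrow> nat \<Rightarrow> (real \<times> real \<Rightarrow> nat \<Rightarrow> complex)
    \<Rightarrow> (nat \<Rightarrow> real) \<Rightarrow> (nat \<Rightarrow> real) \<Rightarrow> complex mat" where
  "dtheta_mat n M a \<theta> \<phi> =
     mat n M (\<lambda>(i, m). vector_derivative (\<lambda>t. a (t, \<phi> m) i) (at (\<theta> m)))"

definition dphi_mat :: "nat \<Rightarrow> nat \<Rightarrow> (real \<times> real \<Rightarrow> nat \<Rightarrow> complex)
    \<Rightarrow> (nat \<Rightarrow> real) \<Rightarrow> (nat \<Rightarrow> real) \<Rightarrow> complex mat" where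
  "dphi_mat n M a \<theta> \<phi> =
     mat n M (\<lambda>(i, m). vector_derivative (\<lambda>s. a (\<theta> m, s) i) (at (\<phi> m)))"

definition diag_mat :: "nat \<Rightarrow> (nat \<Rightarrow> complex) \<Rightarrow> complex mat" where
  "diag_mat M \<alpha> = mat M M (\<lambda>(i, j). if i = j then \<alpha> i else 0)"

text \<open>The blocks F11 (with Ad = A-dot_theta, Bd = B-dot_theta; F22 with phi), F12, F13 (F23), F33.\<close>
definition Fdiag :: "complex mat \<Rightarrow> complex mat \<Rightarrow> complex mat \<Rightarrow> complex mat \<Rightarrow> complex mat
    \<Rightarrow> complex mat \<Rightarrow> complex mat" where
  "Fdiag U A B Ad Bd Rx =
     hprod (transpose_mat (U * herm A * Rx * A * herm U)) (herm Bd * Bd)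
   + hprod (transpose_mat (U * herm A * Rx * Ad * herm U)) (herm B * Bd)
   + hprod (transpose_mat (U * herm Ad * Rx * A * herm U)) (herm Bd * B)
   + hprod (transpose_mat (U * herm Ad * Rx * Ad * herm U)) (herm B * B)"

definition F12 :: "complex mat \<Rightarrow> complex mat \<Rightarrow> complex mat \<Rightarrow> complex mat \<Rightarrow> complex mat
    \<Rightarrow> complex mat \<Rightarrow> complex mat \<Rightarrow> complex mat \<Rightarrow> complex mat" where
  "F12 U A B Adt Adp Bdt Bdp Rx =
     hprod (transpose_mat (U * herm A * Rx * A * herm U)) (herm Bdt * Bdp)
   + hprod (transpose_mat (U * herm A * Rx * Adt * herm U)) (herm B * Bdp)
   + hprod (transpose_mat (U * herm Adp * Rx * A * herm U)) (herm Bdt * B)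
   + hprod (transpose_mat (U * herm Adp * Rx * Adt * herm U)) (herm B * B)"

definition F13 :: "complex mat \<Rightarrow> complex mat \<Rightarrow> complex mat \<Rightarrow> complex mat \<Rightarrow> complex mat
    \<Rightarrow> complex mat \<Rightarrow> complex mat" where
  "F13 U A B Ad Bd Rx =
     hprod (transpose_mat (herm A * Rx * A * herm U)) (herm Bd * B)
   + hprod (transpose_mat (herm A * Rx * Ad * herm U)) (herm B * B)"

definition F33 :: "complex mat \<Rightarrow> complex mat \<Rightarrow> complex mat \<Rightarrow> complex mat" where
  "F33 A B Rx = hprod (transpose_mat (herm A * Rx * A)) (herm B * B)"

definition block4 :: "nat \<Rightarrow> (nat \<Rightarrow> nat \<Rightarrow> real mat) \<Rightarrow> real mat" where
  "block4 M blk = mat (4 * M) (4 * M)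
     (\<lambda>(i, j). blk (i div M) (j div M) $$ (i mod M, j mod M))"

definition FIM :: "nat \<Rightarrow> real \<Rightarrow> nat \<Rightarrow> nat \<Rightarrow> nat
    \<Rightarrow> (real \<times> real \<Rightarrow> nat \<Rightarrow> complex) \<Rightarrow> (real \<times> real \<Rightarrow> nat \<Rightarrow> complex)
    \<Rightarrow> (nat \<Rightarrow> real) \<Rightarrow> (nat \<Rightarrow> real) \<Rightarrow> (nat \<Rightarrow> complex) \<Rightarrow> complex mat \<Rightarrow> real mat" where
  "FIM L ss2 Nt Nr M a b \<theta> \<phi> \<alpha> W =
    (let Rx = W * herm W;
         A = steer_mat Nt M a \<theta> \<phi>; B = steer_mat Nr M b \<theta> \<phi>;
         Adt = dtheta_mat Nt M a \<theta> \<phi>; Adp = dphi_mat Nt M a \<theta> \<phi>;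
         Bdt = dtheta_mat Nr M b \<theta> \<phi>; Bdp = dphi_mat Nr M b \<theta> \<phi>;
         U = diag_mat M \<alpha>;
         G11 = Fdiag U A B Adt Bdt Rx; G22 = Fdiag U A B Adp Bdp Rx;
         G12 = F12 U A B Adt Adp Bdt Bdp Rx;
         G13 = F13 U A B Adt Bdt Rx; G23 = F13 U A B Adp Bdp Rx;
         G33 = F33 A B Rx;
         blk = (\<lambda>p q.
           [[ReM G11, ReM G12, ReM G13, - ImM G13],
            [transpose_mat (ReM G12), ReM G22, ReM G23, - ImM G23],
            [transpose_mat (ReM G13), transpose_mat (ReM G23), ReM G33, - ImM G33],
            [- transpose_mat (ImM G13), - transpose_mat (ImM G23),
             - transpose_mat (ImM G33), ReM G33]] ! p ! q)
     in (2 * real L / ss2) \<cdot>\<^sub>m block4 M blk)"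

text \<open>\<open>hw H W k j = h_k^H w_j\<close>, with \<open>h_k\<close> the k-th column of H and \<open>w_j\<close> the j-th column of W.\<close>
definition hw :: "complex mat \<Rightarrow> complex mat \<Rightarrow> nat \<Rightarrow> nat \<Rightarrow> complex" where
  "hw H W k j = (\<Sum>i<dim_row H. cnj (H $$ (i, k)) * W $$ (i, j))"

text \<open>Rate of user k. W = [W_c, W_s] with W_c the first K = dim_col H columns,
  W_s the remaining columns; sc k is the noise variance sigma_ck^2.\<close>
definition rate :: "complex mat \<Rightarrow> (nat \<Rightarrow> real) \<Rightarrow> complex mat \<Rightarrow> nat \<Rightarrow> real" where
  "rate H sc W k =
     ln (1 + (cmod (hw H W k k))\<^sup>2 /
          ((\<Sum>j\<in>{..<dim_col H} - {k}. (cmod (hw H W k j))\<^sup>2)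
           + (\<Sum>j\<in>{dim_col H..<dim_col W}. (cmod (hw H W k j))\<^sup>2)
           + sc k))"

definition obj :: "real \<Rightarrow> real \<Rightarrow> complex mat \<Rightarrow> (nat \<Rightarrow> real) \<Rightarrow> nat \<Rightarrow> real \<Rightarrow> nat \<Rightarrow> nat
    \<Rightarrow> (real \<times> real \<Rightarrow> nat \<Rightarrow> complex) \<Rightarrow> (real \<times> real \<Rightarrow> nat \<Rightarrow> complex)
    \<Rightarrow> (nat \<Rightarrow> real) \<Rightarrow> (nat \<Rightarrow> real) \<Rightarrow> (nat \<Rightarrow> complex) \<Rightarrow> complex mat \<Rightarrow> real" where
  "obj dc ds H sc L ss2 Nr M a b \<theta> \<phi> \<alpha> W =
     dc * (\<Sum>k<dim_col H. rate H sc W k)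
     - ds * mtrace (minv (FIM L ss2 (dim_row H) Nr M a b \<theta> \<phi> \<alpha> W))"

definition Nmat :: "complex mat \<Rightarrow> complex mat \<Rightarrow> complex mat \<Rightarrow> complex mat \<Rightarrow> complex mat" where
  "Nmat H A Adt Adp = mat (dim_row H) (dim_col H + 3 * dim_col A)
     (\<lambda>(i, j). if j < dim_col H then H $$ (i, j)
              else if j < dim_col H + dim_col A then A $$ (i, j - dim_col H)
              else if j < dim_col H + 2 * dim_col A then Adt $$ (i, j - dim_col H - dim_col A)
              else Adp $$ (i, j - dim_col H - 2 * dim_col A))"

end

(* Project every column of W orthogonally onto the column space of N = [H, A, A_theta, A_phi],
   getting N P with N^H (N P) = N^H W.  The rates see W only through h_k^H W, and the Fisher
   information only through X^H R_x Y = (X^H W)(Y^H W)^H with X, Y among A, A_theta, A_phi; all of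
   these are blocks of N^H W, so f (N P) = f W.  By Pythagoras the projection does not increase the
   transmit power, and tr (P P^H N^H N) = tr ((N P)(N P)^H) is exactly that power.  Hence both
   problems attain the same set of objective values. *)

theory Submission
  imports Defs
begin

definition cinner :: "nat \<Rightarrow> (nat \<Rightarrow> complex) \<Rightarrow> (nat \<Rightarrow> complex) \<Rightarrow> complex" where
  "cinner m x y = (\<Sum>i<m. cnj (x i) * y i)"

definition lincomb ::
    "nat \<Rightarrow> (nat \<Rightarrow> nat \<Rightarrow> complex) \<Rightarrow> (nat \<Rightarrow> complex) \<Rightarrow> nat \<Rightarrow> complex" where
  "lincomb n V c = (\<lambda>i. \<Sum>k<n. c k * V k i)"

lemma cinner_lincomb_left:
  "cinner m (lincomb n V c) y = (\<Sum>k<n. cnj (c k) * cinner m (V k) y)"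
  unfolding cinner_def lincomb_def
  by (simp add: sum_distrib_left sum_distrib_right mult_ac) (rule sum.swap)

lemma cinner_diff_right: "cinner m x (\<lambda>i. y i - z i) = cinner m x y - cinner m x z"
  unfolding cinner_def by (simp add: right_diff_distrib sum_subtractf)

lemma cinner_scale_right: "cinner m x (\<lambda>i. t * y i) = t * cinner m x y"
  unfolding cinner_def by (simp add: sum_distrib_left mult_ac)

lemma cinner_add_left: "cinner m (\<lambda>i. x i + y i) z = cinner m x z + cinner m y z"
  unfolding cinner_def by (simp add: distrib_right sum.distrib)

lemma cinner_commute: "cinner m y x = cnj (cinner m x y)"
  unfolding cinner_def by (simp add: mult.commute)

lemma cinner_self: "cinner m x x = of_real (\<Sum>i<m. (cmod (x i))\<^sup>2)"
  unfolding cinner_def by (simp add: complex_mult_cnj cmod_power2 mult.commute)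

lemma Re_cinner_self: "Re (cinner m x x) = (\<Sum>i<m. (cmod (x i))\<^sup>2)"
  unfolding cinner_self Re_complex_of_real ..

lemma cinner_self_eq_0_imp: assumes "cinner m x x = 0" shows "cinner m x y = 0"
proof -
  have "(\<Sum>i<m. (cmod (x i))\<^sup>2) = 0"
    using assms unfolding cinner_self of_real_eq_0_iff .
  then have "\<forall>i<m. x i = 0" by (simp add: sum_nonneg_eq_0_iff)
  then show ?thesis by (simp add: cinner_def)
qed

text \<open>Gram--Schmidt step: with \<open>u\<close> the component of \<open>V n\<close> orthogonal to
  \<open>V 0, \<dots>, V (n - 1)\<close>, subtract from the old residual its component along \<open>u\<close>.
  Since \<open>x / 0 = 0\<close>, the degenerate case \<open>u = 0\<close> needs no separate treatment.\<close>
lemma orthogonal_projection_exists: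
  "\<exists>c. \<forall>l<n. cinner m (V l) (\<lambda>i. w i - lincomb n V c i) = 0"
proof (induction n arbitrary: w)
  case 0
  show ?case by simp
next
  case (Suc n)
  obtain c where c: "\<forall>l<n. cinner m (V l) (\<lambda>i. w i - lincomb n V c i) = 0"
    using Suc.IH by blast
  obtain d where d: "\<forall>l<n. cinner m (V l) (\<lambda>i. V n i - lincomb n V d i) = 0"
    using Suc.IH by blast
  define r where "r i = w i - lincomb n V c i" for i
  define u where "u i = V n i - lincomb n V d i" for i
  define t where "t = cinner m u r / cinner m u u"
  define c' where "c' k = (if k < n then c k - t * d k else t)" for k
  have residual: "(\<lambda>i. w i - lincomb (Suc n) V c' i) = (\<lambda>i. r i - t * u i)"
    by (auto simp: r_def u_def c'_def lincomb_def algebra_simps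
        sum_subtractf sum_distrib_left)
  have low: "cinner m (V l) (\<lambda>i. r i - t * u i) = 0" if "l < n" for l
    using c d that by (simp add: cinner_diff_right cinner_scale_right r_def u_def)
  have "cinner m u (\<lambda>i. r i - t * u i) = cinner m u r - t * cinner m u u"
    by (simp only: cinner_diff_right cinner_scale_right)
  also have "\<dots> = 0"
    using cinner_self_eq_0_imp[of m u r] by (cases "cinner m u u = 0") (simp_all add: t_def)
  finally have "cinner m u (\<lambda>i. r i - t * u i) = 0" .
  moreover have "V n = (\<lambda>i. u i + lincomb n V d i)"
    by (simp add: u_def)
  ultimately have "cinner m (V n) (\<lambda>i. r i - t * u i) = 0"
    using low by (simp add: cinner_add_left cinner_lincomb_left)
  then have "\<forall>l<Suc n. cinner m (V l) (\<lambda>i. w i - lincomb (Suc n) V c' i) = 0"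
    using low by (simp add: residual less_Suc_eq)
  then show ?case by blast
qed

lemma orthogonal_projection_norm_le:
  assumes "\<forall>l<n. cinner m (V l) (\<lambda>i. w i - lincomb n V c i) = 0"
  shows "(\<Sum>i<m. (cmod (lincomb n V c i))\<^sup>2) \<le> (\<Sum>i<m. (cmod (w i))\<^sup>2)"
proof -
  define y where "y = lincomb n V c"
  define e where "e = (\<lambda>i. w i - y i)"
  have ye: "cinner m y e = 0"
    using assms by (simp add: y_def e_def cinner_lincomb_left)
  then have ey: "cinner m e y = 0"
    by (simp add: cinner_commute[of m e])
  have w: "w = (\<lambda>i. y i + e i)"
    by (simp add: e_def)
  have "cinner m w w = cinner m y y + cinner m y e + cinner m e y + cinner m e e"
    by (subst (1 2) w) (simp add: cinner_def algebra_simps sum.distrib)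
  then have "Re (cinner m w w) = Re (cinner m y y) + Re (cinner m e e)"
    using ye ey by simp
  moreover have "Re (cinner m e e) \<ge> 0"
    by (simp add: Re_cinner_self sum_nonneg)
  ultimately show ?thesis
    by (simp add: Re_cinner_self y_def)
qed

lemma herm_dim [simp]: "dim_row (herm X) = dim_col X" "dim_col (herm X) = dim_row X"
  by (simp_all add: herm_def)

lemma herm_index [simp]:
  "i < dim_col X \<Longrightarrow> j < dim_row X \<Longrightarrow> herm X $$ (i, j) = cnj (X $$ (j, i))"
  by (simp add: herm_def)

lemma herm_herm [simp]: "herm (herm X) = X"
  by (auto simp: herm_def)

lemma herm_carrier_mat [simp]: "X \<in> carrier_mat m n \<Longrightarrow> herm X \<in> carrier_mat n m"
  by (intro carrier_matI) auto

lemma index_mult_mat_sum: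
  "i < dim_row A \<Longrightarrow> j < dim_col B \<Longrightarrow> dim_col A = dim_row B \<Longrightarrow>
    (A * B) $$ (i, j) = (\<Sum>k<dim_col A. A $$ (i, k) * B $$ (k, j))"
  by (simp add: scalar_prod_def atLeast0LessThan)

lemma herm_mult_index:
  assumes "m < dim_col X" "j < dim_col W" "dim_row W = dim_row X"
  shows "(herm X * W) $$ (m, j) = (\<Sum>i<dim_row X. cnj (X $$ (i, m)) * W $$ (i, j))"
proof -
  have "(herm X * W) $$ (m, j) = (\<Sum>i<dim_row X. herm X $$ (m, i) * W $$ (i, j))"
    using assms by (intro trans[OF index_mult_mat_sum]) auto
  also have "\<dots> = (\<Sum>i<dim_row X. cnj (X $$ (i, m)) * W $$ (i, j))"
    using assms by (intro sum.cong) auto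
  finally show ?thesis .
qed

lemma herm_mult: assumes "dim_col A = dim_row B" shows "herm (A * B) = herm B * herm A"
proof (rule eq_matI)
  fix i j assume ij: "i < dim_row (herm B * herm A)" "j < dim_col (herm B * herm A)"
  have "herm (A * B) $$ (i, j) = cnj ((A * B) $$ (j, i))"
    using ij by simp
  also have "\<dots> = cnj (\<Sum>k<dim_col A. A $$ (j, k) * B $$ (k, i))"
    by (subst index_mult_mat_sum) (use ij assms in auto)
  also have "\<dots> = (\<Sum>k<dim_col A. herm B $$ (i, k) * herm A $$ (k, j))"
    using ij assms by (auto simp: mult.commute intro!: sum.cong)
  also have "\<dots> = (herm B * herm A) $$ (i, j)"
    by (subst index_mult_mat_sum) (use ij assms in auto)
  finally show "herm (A * B) $$ (i, j) = (herm B * herm A) $$ (i, j)" .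
qed (use assms in auto)

lemma mtrace_mult_comm:
  assumes "A \<in> carrier_mat m n" "B \<in> carrier_mat n m"
  shows "mtrace (A * B) = mtrace (B * A)"
proof -
  have "mtrace (A * B) = (\<Sum>i<m. \<Sum>k<n. A $$ (i, k) * B $$ (k, i))"
    using assms by (auto simp: mtrace_def index_mult_mat_sum simp del: index_mult_mat(1) intro!: sum.cong)
  also have "\<dots> = (\<Sum>k<n. \<Sum>i<m. B $$ (k, i) * A $$ (i, k))"
    by (subst sum.swap) (simp add: mult.commute)
  also have "\<dots> = mtrace (B * A)"
    using assms by (auto simp: mtrace_def index_mult_mat_sum simp del: index_mult_mat(1) intro!: sum.cong)
  finally show ?thesis .
qed

lemma Re_mtrace_mult_herm:
  assumes "X \<in> carrier_mat m n"
  shows "Re (mtrace (X * herm X)) = (\<Sum>j<n. \<Sum>i<m. (cmod (X $$ (i, j)))\<^sup>2)"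
proof -
  have "mtrace (X * herm X) = (\<Sum>i<m. \<Sum>j<n. X $$ (i, j) * cnj (X $$ (i, j)))"
    using assms by (auto simp: mtrace_def index_mult_mat_sum simp del: index_mult_mat(1) intro!: sum.cong)
  also have "\<dots> = (\<Sum>j<n. cinner m (\<lambda>i. X $$ (i, j)) (\<lambda>i. X $$ (i, j)))"
    unfolding cinner_def by (subst sum.swap) (simp add: mult.commute)
  finally show ?thesis
    by (simp only: Re_sum Re_cinner_self)
qed

lemma mtrace_mult_herm_cyclic:
  assumes "N \<in> carrier_mat m n" "P \<in> carrier_mat n p"
  shows "mtrace (P * herm P * herm N * N) = mtrace (N * P * herm (N * P))"
proof -
  have "mtrace (P * herm P * herm N * N) = mtrace (N * (P * herm P * herm N))"
    using assms by (intro mtrace_mult_comm[of _ n m]) auto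
  also have "N * (P * herm P * herm N) = N * P * (herm P * herm N)"
  proof -
    have "P * herm P * herm N = P * (herm P * herm N)"
      using assms by (intro assoc_mult_mat) auto
    moreover have "N * (P * (herm P * herm N)) = N * P * (herm P * herm N)"
      using assms by (intro assoc_mult_mat[symmetric] mult_carrier_mat) auto
    ultimately show ?thesis
      by simp
  qed
  also have "herm P * herm N = herm (N * P)"
    using assms by (simp add: herm_mult)
  finally show ?thesis .
qed

lemma column_space_projection:
  assumes N: "N \<in> carrier_mat m n" and W: "W \<in> carrier_mat m p"
  obtains P where "P \<in> carrier_mat n p" "herm N * (N * P) = herm N * W"
    "Re (mtrace (N * P * herm (N * P))) \<le> Re (mtrace (W * herm W))"
proof -
  define V where "V k i = N $$ (i, k)" for k i
  have "\<forall>j. \<exists>c. \<forall>l<n. cinner m (V l) (\<lambda>i. W $$ (i, j) - lincomb n V c i) = 0"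
    by (intro allI orthogonal_projection_exists)
  then obtain C
    where C: "\<And>j l. l < n \<Longrightarrow> cinner m (V l) (\<lambda>i. W $$ (i, j) - lincomb n V (C j) i) = 0"
    by metis
  define P where "P = mat n p (\<lambda>(k, j). C j k)"
  have P: "P \<in> carrier_mat n p"
    by (simp add: P_def)
  have NP: "(N * P) $$ (i, j) = lincomb n V (C j) i" if "i < m" "j < p" for i j
    by (subst index_mult_mat_sum)
      (use that N in \<open>auto simp: P_def lincomb_def V_def mult.commute\<close>)
  have "herm N * (N * P) = herm N * W"
  proof (rule eq_matI)
    fix l j assume "l < dim_row (herm N * W)" "j < dim_col (herm N * W)"
    then have lj: "l < n" "j < p"
      using N W by auto
    have "(herm N * W) $$ (l, j) = cinner m (V l) (\<lambda>i. W $$ (i, j))"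
      using lj N W by (subst herm_mult_index) (auto simp: cinner_def V_def)
    moreover have "(herm N * (N * P)) $$ (l, j) = cinner m (V l) (lincomb n V (C j))"
      using lj N P by (subst herm_mult_index)
        (auto simp: cinner_def V_def NP simp del: index_mult_mat(1))
    ultimately show "(herm N * (N * P)) $$ (l, j) = (herm N * W) $$ (l, j)"
      using C[OF lj(1), of j] by (simp add: cinner_diff_right)
  qed (use N W P in auto)
  moreover have "Re (mtrace (N * P * herm (N * P))) \<le> Re (mtrace (W * herm W))"
  proof -
    have "Re (mtrace (N * P * herm (N * P)))
        = (\<Sum>j<p. \<Sum>i<m. (cmod (lincomb n V (C j) i))\<^sup>2)"
      using N P by (simp add: Re_mtrace_mult_herm[of _ m p] NP del: index_mult_mat(1))
    also have "\<dots> \<le> (\<Sum>j<p. \<Sum>i<m. (cmod (W $$ (i, j)))\<^sup>2)"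
      by (intro sum_mono orthogonal_projection_norm_le) (use C in blast)
    also have "\<dots> = Re (mtrace (W * herm W))"
      using W by (simp add: Re_mtrace_mult_herm)
    finally show ?thesis .
  qed
  ultimately show ?thesis
    using P that by blast
qed

lemma herm_mult_gram_mult:
  assumes "dim_row X = dim_row W" "dim_row Y = dim_row W"
  shows "herm X * (W * herm W) * Y = (herm X * W) * herm (herm Y * W)"
proof -
  have X: "herm X \<in> carrier_mat (dim_col X) (dim_row W)"
    and Y: "Y \<in> carrier_mat (dim_row W) (dim_col Y)"
    using assms by auto
  have W: "W \<in> carrier_mat (dim_row W) (dim_col W)" "herm W \<in> carrier_mat (dim_col W) (dim_row W)"
    by auto
  have "herm X * (W * herm W) * Y = (herm X * W) * herm W * Y"
    using assoc_mult_mat[OF X W] by simp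
  also have "\<dots> = (herm X * W) * (herm W * Y)"
    by (rule assoc_mult_mat[OF mult_carrier_mat[OF X W(1)] W(2) Y])
  also have "herm W * Y = herm (herm Y * W)"
    using assms by (simp add: herm_mult)
  finally show ?thesis .
qed

lemma mult_herm_mult_gram_mult:
  assumes "dim_row X = dim_row W" "dim_row Y = dim_row W" "dim_col Z = dim_col X"
  shows "Z * herm X * (W * herm W) * Y * V = Z * ((herm X * W) * herm (herm Y * W)) * V"
proof -
  have Z: "Z \<in> carrier_mat (dim_row Z) (dim_col X)"
    and X: "herm X \<in> carrier_mat (dim_col X) (dim_row W)"
    and Y: "Y \<in> carrier_mat (dim_row W) (dim_col Y)"
    and G: "W * herm W \<in> carrier_mat (dim_row W) (dim_row W)"
    using assms by auto
  have "Z * herm X * (W * herm W) * Y = Z * (herm X * (W * herm W) * Y)"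
    using assoc_mult_mat[OF Z X G] assoc_mult_mat[OF Z mult_carrier_mat[OF X G] Y] by simp
  then show ?thesis
    using herm_mult_gram_mult[OF assms(1,2)] by simp
qed

lemma sensing_mat_dims [simp]:
  "dim_row (steer_mat n M a \<theta> \<phi>) = n" "dim_col (steer_mat n M a \<theta> \<phi>) = M"
  "dim_row (dtheta_mat n M a \<theta> \<phi>) = n" "dim_col (dtheta_mat n M a \<theta> \<phi>) = M"
  "dim_row (dphi_mat n M a \<theta> \<phi>) = n" "dim_col (dphi_mat n M a \<theta> \<phi>) = M"
  "dim_row (diag_mat M \<alpha>) = M" "dim_col (diag_mat M \<alpha>) = M"
  by (simp_all add: steer_mat_def dtheta_mat_def dphi_mat_def diag_mat_def)

lemma FIM_cong:
  assumes "dim_row W = Nt" "dim_row W' = Nt"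
    "herm (steer_mat Nt M a \<theta> \<phi>) * W = herm (steer_mat Nt M a \<theta> \<phi>) * W'"
    "herm (dtheta_mat Nt M a \<theta> \<phi>) * W = herm (dtheta_mat Nt M a \<theta> \<phi>) * W'"
    "herm (dphi_mat Nt M a \<theta> \<phi>) * W = herm (dphi_mat Nt M a \<theta> \<phi>) * W'"
  shows "FIM L ss2 Nt Nr M a b \<theta> \<phi> \<alpha> W = FIM L ss2 Nt Nr M a b \<theta> \<phi> \<alpha> W'"
  unfolding FIM_def Let_def Fdiag_def F12_def F13_def F33_def
  using assms by (simp add: herm_mult_gram_mult mult_herm_mult_gram_mult)

lemma hw_eq_herm_mult_index:
  "k < dim_col H \<Longrightarrow> j < dim_col W \<Longrightarrow> dim_row W = dim_row H \<Longrightarrow>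
    hw H W k j = (herm H * W) $$ (k, j)"
  unfolding hw_def by (subst herm_mult_index) auto

lemma rate_cong:
  assumes "dim_row W = dim_row H" "dim_row W' = dim_row H" "herm H * W = herm H * W'"
    "dim_col H \<le> dim_col W" "k < dim_col H"
  shows "rate H sc W k = rate H sc W' k"
proof -
  have cols: "dim_col W' = dim_col W"
    using arg_cong[OF assms(3), of dim_col] by simp
  have hw: "hw H W k j = hw H W' k j" if "j < dim_col W" for j
    using assms cols that by (simp add: hw_eq_herm_mult_index)
  have "(\<Sum>j\<in>{..<dim_col H} - {k}. (cmod (hw H W k j))\<^sup>2)
      = (\<Sum>j\<in>{..<dim_col H} - {k}. (cmod (hw H W' k j))\<^sup>2)"
    using assms(4) by (intro sum.cong) (auto simp: hw)
  moreover have "(\<Sum>j\<in>{dim_col H..<dim_col W}. (cmod (hw H W k j))\<^sup>2)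
      = (\<Sum>j\<in>{dim_col H..<dim_col W}. (cmod (hw H W' k j))\<^sup>2)"
    by (intro sum.cong) (auto simp: hw)
  ultimately show ?thesis
    using assms(4,5) unfolding rate_def cols by (simp add: hw)
qed

lemma obj_cong:
  assumes "dim_row W = dim_row H" "dim_row W' = dim_row H"
    "herm H * W = herm H * W'" "dim_col H \<le> dim_col W"
    "herm (steer_mat (dim_row H) M a \<theta> \<phi>) * W = herm (steer_mat (dim_row H) M a \<theta> \<phi>) * W'"
    "herm (dtheta_mat (dim_row H) M a \<theta> \<phi>) * W = herm (dtheta_mat (dim_row H) M a \<theta> \<phi>) * W'"
    "herm (dphi_mat (dim_row H) M a \<theta> \<phi>) * W = herm (dphi_mat (dim_row H) M a \<theta> \<phi>) * W'"
  shows "obj dc ds H sc L ss2 Nr M a b \<theta> \<phi> \<alpha> W = obj dc ds H sc L ss2 Nr M a b \<theta> \<phi> \<alpha> W'"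
  unfolding obj_def using rate_cong[OF assms(1-4)] FIM_cong[OF assms(1,2,5-7)] by simp

lemma herm_mult_cong_submatrix:
  assumes eq: "herm N * W = herm N * W'"
    and dims: "dim_row W = dim_row N" "dim_row W' = dim_row N" "dim_row X = dim_row N"
    and cols: "\<And>m. m < dim_col X \<Longrightarrow> off + m < dim_col N"
      "\<And>i m. i < dim_row N \<Longrightarrow> m < dim_col X \<Longrightarrow> X $$ (i, m) = N $$ (i, off + m)"
  shows "herm X * W = herm X * W'"
proof (rule eq_matI)
  have colW: "dim_col W = dim_col W'"
    using arg_cong[OF eq, of dim_col] by simp
  fix m j assume "m < dim_row (herm X * W')" "j < dim_col (herm X * W')"
  then have mj: "m < dim_col X" "j < dim_col W" "j < dim_col W'"
    using colW by auto
  have "(herm X * V) $$ (m, j) = (herm N * V) $$ (off + m, j)"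
    if "dim_row V = dim_row N" "j < dim_col V" for V
    using that mj dims cols by (simp add: herm_mult_index del: index_mult_mat(1))
  then show "(herm X * W) $$ (m, j) = (herm X * W') $$ (m, j)"
    using eq dims mj by metis
qed (use arg_cong[OF eq, of dim_col] in simp_all)

lemma herm_Nmat_mult_cong:
  fixes H A Adt Adp :: "complex mat"
  defines "N \<equiv> Nmat H A Adt Adp"
  assumes eq: "herm N * W = herm N * W'"
    and rows: "dim_row A = dim_row H" "dim_row Adt = dim_row H" "dim_row Adp = dim_row H"
      "dim_row W = dim_row H" "dim_row W' = dim_row H"
    and cols: "dim_col Adt = dim_col A" "dim_col Adp = dim_col A"
  shows "herm H * W = herm H * W'" "herm A * W = herm A * W'"
    "herm Adt * W = herm Adt * W'" "herm Adp * W = herm Adp * W'"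
proof -
  have N: "dim_row N = dim_row H" "dim_col N = dim_col H + 3 * dim_col A"
    by (simp_all add: N_def Nmat_def)
  show "herm H * W = herm H * W'"
    by (rule herm_mult_cong_submatrix[OF eq, where off = 0])
      (use rows N in \<open>auto simp: N_def Nmat_def\<close>)
  show "herm A * W = herm A * W'"
    by (rule herm_mult_cong_submatrix[OF eq, where off = "dim_col H"])
      (use rows N in \<open>auto simp: N_def Nmat_def\<close>)
  show "herm Adt * W = herm Adt * W'"
    by (rule herm_mult_cong_submatrix[OF eq, where off = "dim_col H + dim_col A"])
      (use rows cols N in \<open>auto simp: N_def Nmat_def\<close>)
  show "herm Adp * W = herm Adp * W'"
    by (rule herm_mult_cong_submatrix[OF eq, where off = "dim_col H + 2 * dim_col A"])
      (use rows cols N in \<open>auto simp: N_def Nmat_def\<close>)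
qed

lemma maximum_under_reparametrization:
  fixes f :: "'a \<Rightarrow> 'c :: {Sup, ord}"
  assumes into: "g ` B \<subseteq> A" and onto: "\<And>x. x \<in> A \<Longrightarrow> \<exists>y\<in>B. f (g y) = f x"
  shows "Sup (f ` A) = Sup ((\<lambda>y. f (g y)) ` B)
    \<and> (\<forall>y. y \<in> B \<and> (\<forall>z\<in>B. f (g z) \<le> f (g y)) \<longrightarrow> g y \<in> A \<and> (\<forall>x\<in>A. f x \<le> f (g y)))"
proof -
  have "f ` A = (\<lambda>y. f (g y)) ` B"
  proof
    show "f ` A \<subseteq> (\<lambda>y. f (g y)) ` B"
      using onto by (force simp: image_iff)
    show "(\<lambda>y. f (g y)) ` B \<subseteq> f ` A"
      using into by auto
  qed
  moreover have "\<forall>x\<in>A. f x \<le> f (g y)" if "\<forall>z\<in>B. f (g z) \<le> f (g y)" for y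
    using that onto by metis
  ultimately show ?thesis
    using into by (simp add: image_subset_iff)
qed

theorem proposition5:
  fixes Nt Nr K M L :: nat
    and H :: "complex mat" and sc :: "nat \<Rightarrow> real" and ss2 dc ds Pt :: real
    and a b :: "real \<times> real \<Rightarrow> nat \<Rightarrow> complex"
    and \<theta> \<phi> :: "nat \<Rightarrow> real" and \<alpha> :: "nat \<Rightarrow> complex"
  assumes pos: "Nt > 0" "Nr > 0" "K > 0" "M > 0" "L > 0"
    and H: "H \<in> carrier_mat Nt K"
    and sc: "\<forall>k<K. sc k > 0"
    and ss2: "ss2 > 0"
    and dc: "dc \<ge> 0" and ds: "ds \<ge> 0"
    and Pt: "Pt > 0"
    and a_diff: "\<forall>i<Nt. \<forall>x. (\<lambda>p. a p i) differentiable (at x)"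
    and b_diff: "\<forall>i<Nr. \<forall>x. (\<lambda>p. b p i) differentiable (at x)"
  defines "f \<equiv> obj dc ds H sc L ss2 Nr M a b \<theta> \<phi> \<alpha>"
    and "N \<equiv> Nmat H (steer_mat Nt M a \<theta> \<phi>) (dtheta_mat Nt M a \<theta> \<phi>) (dphi_mat Nt M a \<theta> \<phi>)"
  defines "feas1 \<equiv> {W. W \<in> carrier_mat Nt (K + 3 * M) \<and> Re (mtrace (W * herm W)) \<le> Pt
                     \<and> invertible_mat (FIM L ss2 Nt Nr M a b \<theta> \<phi> \<alpha> W)}"
  defines "feas2 \<equiv> {P. P \<in> carrier_mat (K + 3 * M) (K + 3 * M)
                     \<and> Re (mtrace (P * herm P * herm N * N)) \<le> Pt
                     \<and> invertible_mat (FIM L ss2 Nt Nr M a b \<theta> \<phi> \<alpha> (N * P))}"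
  shows "Sup (f ` feas1) = Sup ((\<lambda>P. f (N * P)) ` feas2)
       \<and> (\<forall>P. P \<in> feas2 \<and> (\<forall>Q\<in>feas2. f (N * Q) \<le> f (N * P))
              \<longrightarrow> N * P \<in> feas1 \<and> (\<forall>W\<in>feas1. f W \<le> f (N * P)))"
proof -
  have H_dims: "dim_row H = Nt" "dim_col H = K"
    using H by auto
  have N: "N \<in> carrier_mat Nt (K + 3 * M)"
    by (simp add: N_def Nmat_def H_dims)
  have into: "N * P \<in> feas1" if "P \<in> feas2" for P
    using that N mtrace_mult_herm_cyclic[OF N] by (auto simp: feas1_def feas2_def)
  have onto: "\<exists>P\<in>feas2. f (N * P) = f W" if "W \<in> feas1" for W
  proof -
    have W: "W \<in> carrier_mat Nt (K + 3 * M)"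
      using that by (simp add: feas1_def)
    obtain P where P: "P \<in> carrier_mat (K + 3 * M) (K + 3 * M)"
      and NP: "herm N * (N * P) = herm N * W"
      and power: "Re (mtrace (N * P * herm (N * P))) \<le> Re (mtrace (W * herm W))"
      using column_space_projection[OF N W] .
    have NP_dims: "dim_row (N * P) = Nt" "dim_col (N * P) = K + 3 * M"
      using N P by auto
    note blocks = herm_Nmat_mult_cong[OF NP[unfolded N_def], folded N_def]
    have FIM: "FIM L ss2 Nt Nr M a b \<theta> \<phi> \<alpha> (N * P) = FIM L ss2 Nt Nr M a b \<theta> \<phi> \<alpha> W"
      using blocks(2-4) W NP_dims by (intro FIM_cong) (auto simp: H_dims)
    have "f (N * P) = f W"
      unfolding f_def using blocks W NP_dims by (intro obj_cong) (auto simp: H_dims)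
    moreover have "P \<in> feas2"
      using that P power FIM mtrace_mult_herm_cyclic[OF N P] by (simp add: feas1_def feas2_def)
    ultimately show ?thesis
      by blast
  qed
  show ?thesis
    using maximum_under_reparametrization[of "\<lambda>P. N * P" feas2 feas1 f] into onto by blast
qed

end
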